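(* Let $1\le k<n$ and let $X$ be a fixed real $n\times k$ matrix of full column rank $k$. Let $\mathbf{F}_2^0$ be the class of all distributions $F$ of $Y=X\beta+e$ in $\mathbb{R}^n$, where $\beta$ ranges over $\mathbb{R}^k$ and the distribution of $e$ ranges over all distributions on $\mathbb{R}^n$ with $Ee=0$ and $Eee'=\sigma^2 I_n$ for some $0<\sigma^2<\infty$. Consider an estimator of the form $$\hat\beta=AY+(Y'H_1Y,\dots,Y'H_kY)'$$ where $A$ is a real $k\times n$ matrix with $AX=I_k$ and $H_1,\dots,H_k$ are real $n\times n$ matrices with $\operatorname{tr}(H_j)=0$ and $X'H_jX=0$ for $j=1,\dots,k$. Suppose $E_F(\|\hat\beta\|^2)<\infty$ for every $F\in\mathbf{F}_2^0$. Then $\hat\beta$ is a linear estimator, i.e., $\hat\beta=BY$ for some (non-random) real $k\times n$ matrix $B$.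
   Context: $E_F$ denotes expectation when $Y$ has distribution $F$; $\|\cdot\|$ is the Euclidean norm. *)

theory Defs
  imports "HOL-Analysis.Analysis" "HOL-Probability.Probability"
begin

definition error_dist :: "(real ^ 'n::finite) measure \<Rightarrow> bool" where
  "error_dist M \<longleftrightarrow> prob_space M \<and> sets M = sets borel \<and>
     (\<forall>i. integrable M (\<lambda>e. e $ i) \<and> (\<integral>e. e $ i \<partial>M) = 0) \<and>
     (\<exists>\<sigma>2 > 0. \<forall>i j. integrable M (\<lambda>e. e $ i * e $ j) \<and>
          (\<integral>e. e $ i * e $ j \<partial>M) = (if i = j then \<sigma>2 else 0))"

definition model_class :: "real ^ 'k ^ 'n \<Rightarrow> (real ^ 'n::finite) measure set" where
  "model_class X = {distr M borel (\<lambda>e. X *v \<beta> + e) | M \<beta>. error_dist M}"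

definition quad_est :: "real ^ 'n ^ 'k \<Rightarrow> ('k \<Rightarrow> real ^ 'n ^ 'n) \<Rightarrow> real ^ 'n \<Rightarrow> real ^ 'k" where
  "quad_est A H y = A *v y + (\<chi> j. y \<bullet> (H j *v y))"

end

theory Submission
  imports Defs
begin

text \<open>If some quadratic form \<open>y' H\<^sub>j y\<close> is not identically zero, polarization gives
  \<open>u = e\<^sub>a + e\<^sub>b\<close> with \<open>u' H\<^sub>j u \<noteq> 0\<close>. Let the error be \<open>e = R U\<close>, with \<open>U = s e\<^sub>i + t e\<^sub>j\<close> for
  \<open>(i, j, s, t)\<close> uniform on \<open>{1..n}\<^sup>2 \<times> {-1, 1}\<^sup>2\<close> (mean zero, covariance a multiple of \<open>I\<^sub>n\<close>,
  \<open>\<plusminus>u\<close> in the support) and an independent scale \<open>R \<ge> 0\<close> with \<open>E R\<^sup>2 < \<infinity>\<close> but \<open>E R\<^sup>4 = \<infinity>\<close>.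
  Take \<open>\<beta> = 0\<close>. On the event \<open>U = \<plusminus>u\<close>, with the sign for which the linear and the quadratic
  part of the \<open>j\<close>-th coordinate of the estimator agree in sign, that coordinate is at least
  \<open>R\<^sup>2 |u' H\<^sub>j u|\<close> in absolute value, so the estimator has infinite second moment. Hence all
  quadratic forms vanish and the estimator is \<open>A Y\<close>.\<close>

lemma inner_axis_matrix_vector_axis:
  fixes M :: "real ^ 'n::finite ^ 'n"
  shows "axis a 1 \<bullet> (M *v axis b 1) = M $ a $ b"
  by (simp add: inner_axis' matrix_vector_mult_basis column_def)

lemma quadratic_form_axis_sum:
  fixes M :: "real ^ 'n::finite ^ 'n"
  shows "(axis a 1 + axis b 1) \<bullet> (M *v (axis a 1 + axis b 1))
           = M $ a $ a + M $ a $ b + M $ b $ a + M $ b $ b"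
  by (simp add: matrix_vector_right_distrib inner_add_left inner_add_right
                inner_axis_matrix_vector_axis)

lemma quadratic_form_eq_0_if_axis_sums:
  fixes M :: "real ^ 'n::finite ^ 'n"
  assumes "\<And>a b. (axis a 1 + axis b 1) \<bullet> (M *v (axis a 1 + axis b 1)) = 0"
  shows "y \<bullet> (M *v y) = 0"
proof -
  have diag: "M $ a $ a = 0" for a
    using assms[of a a] unfolding quadratic_form_axis_sum by simp
  have entries: "M $ a $ b + M $ b $ a = 0" for a b
    using assms[of a b] diag[of a] diag[of b] unfolding quadratic_form_axis_sum by linarith
  have skew: "transpose M = - M"
    by (simp add: vec_eq_iff Finite_Cartesian_Product.transpose_def eq_neg_iff_add_eq_0 entries)
  have "y \<bullet> (M *v y) = (transpose M *v y) \<bullet> y"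
    by (simp add: dot_lmul_matrix)
  also have "\<dots> = - (y \<bullet> (M *v y))"
  proof -
    have "(- M) *v y = - (M *v y)"
      by (simp add: matrix_vector_mult_def vec_eq_iff sum_negf)
    then show ?thesis
      by (simp add: skew inner_commute)
  qed
  finally show ?thesis
    by simp
qed

lemma integrable_geometric_pmf_power:
  assumes "p \<in> {0<..1}" "0 \<le> c" "(1 - p) * c < 1"
  shows "integrable (geometric_pmf p) (\<lambda>m. c ^ m)"
proof -
  have "summable (\<lambda>m. p * ((1 - p) * c) ^ m)"
    using assms by (intro summable_mult summable_geometric) auto
  then show ?thesis
    unfolding measure_pmf_eq_density using assms
    by (subst integrable_density)
       (auto simp: integrable_count_space_nat_iff power_mult_distrib mult_ac)
qed

lemma nn_integral_geometric_pmf_power_eq_infinity: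
  assumes p: "p \<in> {0<..1}" and c: "1 \<le> (1 - p) * c"
  shows "(\<integral>\<^sup>+ m. ennreal (c ^ m) \<partial>geometric_pmf p) = \<infinity>"
proof -
  have "0 \<le> c"
    using p c mult_nonneg_nonpos[of "1 - p" c] by force
  have "p \<le> pmf (geometric_pmf p) m * c ^ m" for m
  proof -
    have "p * 1 \<le> p * ((1 - p) * c) ^ m"
      using p c by (intro mult_left_mono one_le_power) auto
    also have "\<dots> = pmf (geometric_pmf p) m * c ^ m"
      using p by (simp add: power_mult_distrib)
    finally show ?thesis
      by simp
  qed
  then have "ennreal p \<le> ennreal (pmf (geometric_pmf p) m) * ennreal (c ^ m)" for m
    using \<open>0 \<le> c\<close> by (simp add: ennreal_mult[symmetric] ennreal_leI)
  then have "(\<integral>\<^sup>+ m. ennreal p \<partial>count_space (UNIV :: nat set))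
               \<le> (\<integral>\<^sup>+ m. ennreal (c ^ m) \<partial>geometric_pmf p)"
    unfolding nn_integral_measure_pmf by (rule nn_integral_mono)
  moreover have "(\<integral>\<^sup>+ m. ennreal p \<partial>count_space (UNIV :: nat set)) = \<infinity>"
    using p by (simp add: ennreal_mult_top)
  ultimately show ?thesis
    by (simp add: top_unique)
qed

lemma pmf_mult_le_nn_integral: "ennreal (pmf q x) * f x \<le> (\<integral>\<^sup>+ v. f v \<partial>q)"
proof -
  have "(\<integral>\<^sup>+ v. f x * indicator {x} v \<partial>q) \<le> (\<integral>\<^sup>+ v. f v \<partial>q)"
    by (intro nn_integral_mono) (simp split: split_indicator)
  then show ?thesis
    by (simp add: emeasure_pmf_single mult.commute)
qed

lemma has_bochner_integral_pair_pmf_indicator: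
  fixes p :: "'a pmf" and q :: "'b pmf" and f :: "'a \<Rightarrow> real"
  assumes f_nonneg: "\<And>x. 0 \<le> f x" and f_int: "integrable p f"
  shows "has_bochner_integral (pair_pmf p q) (\<lambda>z. f (fst z) * indicator {w} (snd z))
           (measure_pmf.expectation p f * pmf q w)"
proof (rule has_bochner_integral_nn_integral)
  have "(\<integral>\<^sup>+ z. ennreal (f (fst z) * indicator {w} (snd z)) \<partial>pair_pmf p q)
      = (\<integral>\<^sup>+ x. ennreal (f x * pmf q w) \<partial>p)"
    by (simp add: nn_integral_pair_pmf' ennreal_mult' f_nonneg nn_integral_cmult_indicator
                  emeasure_pmf_single ennreal_indicator)
  also have "\<dots> = ennreal (measure_pmf.expectation p f * pmf q w)"
    using f_int f_nonneg by (subst nn_integral_eq_integral) auto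
  finally show "(\<integral>\<^sup>+ z. ennreal (f (fst z) * indicator {w} (snd z)) \<partial>pair_pmf p q) = \<dots>" .
qed (use f_nonneg in \<open>auto intro: integral_nonneg_AE\<close>)

lemma has_bochner_integral_pair_pmf_mult:
  fixes p :: "'a pmf" and q :: "'b pmf" and f :: "'a \<Rightarrow> real" and g :: "'b \<Rightarrow> real"
  assumes f_nonneg: "\<And>x. 0 \<le> f x" and f_int: "integrable p f" and q_finite: "finite (set_pmf q)"
  shows "has_bochner_integral (pair_pmf p q) (\<lambda>z. f (fst z) * g (snd z))
           (measure_pmf.expectation p f * measure_pmf.expectation q g)"
proof -
  have "has_bochner_integral (pair_pmf p q)
          (\<lambda>z. \<Sum>w\<in>set_pmf q. g w * (f (fst z) * indicator {w} (snd z)))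
          (\<Sum>w\<in>set_pmf q. g w * (measure_pmf.expectation p f * pmf q w))"
    using f_nonneg f_int
    by (intro has_bochner_integral_sum has_bochner_integral_mult_right
              has_bochner_integral_pair_pmf_indicator)
  moreover have "(\<Sum>w\<in>set_pmf q. g w * (f a * indicator {w} b)) = f a * g b"
    if "b \<in> set_pmf q" for a b
  proof -
    have "(\<Sum>w\<in>set_pmf q. g w * (f a * indicator {w} b))
        = (\<Sum>w\<in>set_pmf q. if w = b then f a * g b else 0)"
      by (intro sum.cong) (auto simp: indicator_def)
    then show ?thesis
      using q_finite that by simp
  qed
  then have AE: "AE z in pair_pmf p q.
      (\<Sum>w\<in>set_pmf q. g w * (f (fst z) * indicator {w} (snd z))) = f (fst z) * g (snd z)"
    by (auto simp: AE_measure_pmf_iff)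
  moreover have "(\<Sum>w\<in>set_pmf q. g w * (measure_pmf.expectation p f * pmf q w))
      = measure_pmf.expectation p f * measure_pmf.expectation q g"
    using q_finite
    by (simp add: integral_measure_pmf_real[of "set_pmf q"] sum_distrib_left mult_ac)
  ultimately show ?thesis
    using has_bochner_integral_cong_AE[OF _ _ AE] by simp
qed

lemma nn_integral_distr_pair_pmf_ge:
  fixes p :: "'a pmf" and q :: "'b pmf"
  assumes "f \<in> borel_measurable borel"
  shows "ennreal (pmf q w) * (\<integral>\<^sup>+ x. f (e (x, w)) \<partial>p) \<le> (\<integral>\<^sup>+ y. f y \<partial>distr (pair_pmf p q) borel e)"
proof -
  have "ennreal (pmf q w) * (\<integral>\<^sup>+ x. f (e (x, w)) \<partial>p) = (\<integral>\<^sup>+ x. ennreal (pmf q w) * f (e (x, w)) \<partial>p)"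
    by (simp add: nn_integral_cmult)
  also have "\<dots> \<le> (\<integral>\<^sup>+ x. \<integral>\<^sup>+ v. f (e (x, v)) \<partial>q \<partial>p)"
    by (intro nn_integral_mono pmf_mult_le_nn_integral)
  also have "\<dots> = (\<integral>\<^sup>+ y. f y \<partial>distr (pair_pmf p q) borel e)"
    using assms by (simp add: nn_integral_distr nn_integral_pair_pmf')
  finally show ?thesis .
qed

lemma error_dist_scale_mixture:
  fixes p :: "'a pmf" and q :: "'b pmf" and r :: "'a \<Rightarrow> real" and U :: "'b \<Rightarrow> real ^ 'n::finite"
  assumes r_nonneg: "\<And>x. 0 \<le> r x"
    and r2_int: "integrable p (\<lambda>x. (r x)\<^sup>2)"
    and r2_pos: "0 < measure_pmf.expectation p (\<lambda>x. (r x)\<^sup>2)"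
    and q_finite: "finite (set_pmf q)"
    and U_mean: "\<And>i. measure_pmf.expectation q (\<lambda>v. U v $ i) = 0"
    and U_cov: "\<And>i j. measure_pmf.expectation q (\<lambda>v. U v $ i * U v $ j) = (if i = j then c else 0)"
    and c_pos: "0 < c"
  shows "error_dist (distr (pair_pmf p q) borel (\<lambda>z. r (fst z) *\<^sub>R U (snd z)))"
proof -
  define e where "e z = r (fst z) *\<^sub>R U (snd z)" for z
  define \<sigma>2 where "\<sigma>2 = measure_pmf.expectation p (\<lambda>x. (r x)\<^sup>2) * c"
  have r_int: "integrable p r"
    by (rule measure_pmf.square_integrable_imp_integrable[OF _ r2_int]) simp
  have mean: "has_bochner_integral (pair_pmf p q) (\<lambda>z. e z $ i) 0" for i
    using has_bochner_integral_pair_pmf_mult[OF r_nonneg r_int q_finite, of "\<lambda>v. U v $ i"]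
    by (simp add: e_def U_mean)
  have cov: "has_bochner_integral (pair_pmf p q) (\<lambda>z. e z $ i * e z $ j) (if i = j then \<sigma>2 else 0)"
    for i j
    using has_bochner_integral_pair_pmf_mult[OF _ r2_int q_finite, of "\<lambda>v. U v $ i * U v $ j"]
    by (cases "i = j") (simp_all add: e_def \<sigma>2_def U_cov power2_eq_square mult_ac)
  have e_meas: "e \<in> measurable (pair_pmf p q) borel"
    by simp
  have "\<sigma>2 > 0"
    using r2_pos c_pos by (simp add: \<sigma>2_def)
  moreover have "integrable (distr (pair_pmf p q) borel e) (\<lambda>x. x $ i)"
    "(\<integral>x. x $ i \<partial>distr (pair_pmf p q) borel e) = 0" for i
    using mean[of i] by (simp_all add: integrable_distr_eq integral_distr has_bochner_integral_iff)
  moreover have "integrable (distr (pair_pmf p q) borel e) (\<lambda>x. x $ i * x $ j)"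
    "(\<integral>x. x $ i * x $ j \<partial>distr (pair_pmf p q) borel e) = (if i = j then \<sigma>2 else 0)" for i j
    using cov[of i j] by (simp_all add: integrable_distr_eq integral_distr has_bochner_integral_iff)
  ultimately show ?thesis
    unfolding error_dist_def e_def[symmetric]
    using measure_pmf.prob_space_distr[OF e_meas] by auto
qed

definition signed_axis_pairs :: "('n::finite \<times> 'n \<times> real \<times> real) set" where
  "signed_axis_pairs = UNIV \<times> UNIV \<times> {-1, 1} \<times> {-1, 1}"

definition signed_axis_sum :: "'n::finite \<times> 'n \<times> real \<times> real \<Rightarrow> real ^ 'n" where
  "signed_axis_sum = (\<lambda>(i, j, s, t). s *\<^sub>R axis i 1 + t *\<^sub>R axis j 1)"

lemma finite_signed_axis_pairs: "finite signed_axis_pairs"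
  by (simp add: signed_axis_pairs_def)

lemma signed_axis_pairs_nonempty: "signed_axis_pairs \<noteq> {}"
  by (simp add: signed_axis_pairs_def)

lemma card_signed_axis_pairs: "card (signed_axis_pairs :: ('n::finite \<times> _) set) = 4 * CARD('n)\<^sup>2"
  by (simp add: signed_axis_pairs_def card_cartesian_product power2_eq_square)

lemma sum_signed_axis_pairs:
  "(\<Sum>v\<in>signed_axis_pairs. f v)
     = (\<Sum>i\<in>UNIV. \<Sum>j\<in>UNIV. \<Sum>s\<in>{-1, 1}. \<Sum>t\<in>{-1, 1}. f (i, j, s, t))"
  unfolding signed_axis_pairs_def sum.cartesian_product by (simp only: split_def prod.collapse)

lemma sum_signed_axis_sum_nth: "(\<Sum>v\<in>signed_axis_pairs. signed_axis_sum v $ a) = 0"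
  by (simp add: sum_signed_axis_pairs signed_axis_sum_def)

lemma sum_signed_axis_sum_nth_mult:
  fixes a b :: "'n::finite"
  shows "(\<Sum>v\<in>signed_axis_pairs. signed_axis_sum v $ a * signed_axis_sum v $ b)
           = (if a = b then 8 * real CARD('n) else 0)"
proof -
  have signs: "(\<Sum>s\<in>{-1, 1}. \<Sum>t\<in>{-1, 1}.
                  signed_axis_sum (i, j, s, t) $ a * signed_axis_sum (i, j, s, t) $ b)
      = 4 * (axis i 1 $ a * axis i 1 $ b) + 4 * (axis j 1 $ a * axis j 1 $ b)" for i j
    by (simp add: signed_axis_sum_def algebra_simps)
  have axes: "(\<Sum>i\<in>UNIV. axis i 1 $ a * axis i 1 $ b) = (if a = b then 1 else (0::real))"
    by (simp add: axis_def if_distrib[of "\<lambda>x. x * _"] cong: if_cong)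
  show ?thesis
    unfolding sum_signed_axis_pairs signs
    by (simp add: sum.distrib sum_distrib_left[symmetric] axes)
qed

lemma expectation_signed_axis_sum_nth:
  "measure_pmf.expectation (pmf_of_set signed_axis_pairs) (\<lambda>v. signed_axis_sum v $ a) = 0"
  by (simp add: integral_pmf_of_set finite_signed_axis_pairs signed_axis_pairs_nonempty
                sum_signed_axis_sum_nth)

lemma expectation_signed_axis_sum_nth_mult:
  fixes a b :: "'n::finite"
  shows "measure_pmf.expectation (pmf_of_set signed_axis_pairs)
           (\<lambda>v. signed_axis_sum v $ a * signed_axis_sum v $ b) = (if a = b then 2 / CARD('n) else 0)"
  by (simp add: integral_pmf_of_set finite_signed_axis_pairs signed_axis_pairs_nonempty
                sum_signed_axis_sum_nth_mult card_signed_axis_pairs power2_eq_square)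

text \<open>The scale \<open>(3/2)\<^sup>M\<close> with \<open>P(M = m) = (1/4)\<^sup>m (3/4)\<close>: its second moment is a geometric series
  with ratio \<open>9/16\<close>, its fourth moment one with ratio \<open>81/64\<close>.\<close>

definition heavy_tailed_error :: "(real ^ 'n::finite) measure" where
  "heavy_tailed_error = distr (pair_pmf (geometric_pmf (3/4)) (pmf_of_set signed_axis_pairs)) borel
     (\<lambda>z. (3/2) ^ fst z *\<^sub>R signed_axis_sum (snd z))"

lemma nn_integral_heavy_tail_scale_fourth_power:
  "(\<integral>\<^sup>+ m. ennreal (((3/2::real) ^ m) ^ 4) \<partial>geometric_pmf (3/4)) = \<infinity>"
proof -
  have base: "(81/16::real) = (3/2) ^ 4"
    by (simp add: power4_eq_xxxx)
  have "((3/2::real) ^ m) ^ 4 = (81/16) ^ m" for m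
    by (simp only: base power_mult[symmetric] mult.commute)
  then show ?thesis
    by (simp add: nn_integral_geometric_pmf_power_eq_infinity)
qed

lemma error_dist_heavy_tailed_error: "error_dist (heavy_tailed_error :: (real ^ 'n::finite) measure)"
  unfolding heavy_tailed_error_def
proof (rule error_dist_scale_mixture[where c = "2 / CARD('n)"])
  have square: "((3/2::real) ^ m)\<^sup>2 = (9/4) ^ m" for m
    by (simp add: power_mult_distrib[symmetric] power2_eq_square)
  show r2_int: "integrable (geometric_pmf (3/4)) (\<lambda>m. ((3/2::real) ^ m)\<^sup>2)"
    unfolding square by (rule integrable_geometric_pmf_power) auto
  have "1 \<le> measure_pmf.expectation (geometric_pmf (3/4)) (\<lambda>m. ((3/2::real) ^ m)\<^sup>2)"
    using r2_int by (intro measure_pmf.integral_ge_const) (auto simp: square)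
  then show "0 < measure_pmf.expectation (geometric_pmf (3/4)) (\<lambda>m. ((3/2::real) ^ m)\<^sup>2)"
    by simp
qed (simp_all add: finite_signed_axis_pairs signed_axis_pairs_nonempty
                   expectation_signed_axis_sum_nth expectation_signed_axis_sum_nth_mult)

lemma borel_measurable_quad_est: "quad_est A H \<in> borel_measurable borel"
proof (rule borel_measurable_continuous_onI)
  show "continuous_on UNIV (quad_est A H)"
    unfolding quad_est_def
    by (intro continuous_intros continuous_on_vec_lambda matrix_vector_mult_linear_continuous_on)
qed

lemma quad_est_scaleR_lower_bound:
  assumes "0 \<le> t" and sign: "0 \<le> (A *v w) $ j * (w \<bullet> (H j *v w))"
  shows "(t\<^sup>2 * (w \<bullet> (H j *v w)))\<^sup>2 \<le> (norm (quad_est A H (t *\<^sub>R w)))\<^sup>2"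
proof -
  define a where "a = t * (A *v w) $ j"
  define b where "b = t\<^sup>2 * (w \<bullet> (H j *v w))"
  have coord: "quad_est A H (t *\<^sub>R w) $ j = a + b"
    by (simp add: quad_est_def a_def b_def matrix_vector_mult_scaleR power2_eq_square)
  have "a * b = t ^ 3 * ((A *v w) $ j * (w \<bullet> (H j *v w)))"
    by (simp add: a_def b_def power2_eq_square power3_eq_cube)
  then have "0 \<le> a * b"
    using \<open>0 \<le> t\<close> sign by simp
  then have "b\<^sup>2 \<le> (a + b)\<^sup>2"
    by (simp add: power2_sum)
  also have "\<dots> \<le> (norm (quad_est A H (t *\<^sub>R w)))\<^sup>2"
    using component_le_norm_cart[of "quad_est A H (t *\<^sub>R w)" j] coord
    by (simp add: abs_le_square_iff[symmetric])
  finally show ?thesis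
    by (simp add: b_def)
qed

lemma quad_est_signed_scaleR_lower_bound:
  obtains s :: real where "s \<in> {-1, 1}"
    and "\<And>t. 0 \<le> t \<Longrightarrow> (t\<^sup>2 * (u \<bullet> (H j *v u)))\<^sup>2 \<le> (norm (quad_est A H (t *\<^sub>R s *\<^sub>R u)))\<^sup>2"
proof -
  have form: "(s *\<^sub>R u) \<bullet> (H j *v (s *\<^sub>R u)) = u \<bullet> (H j *v u)" if "s \<in> {-1, 1}" for s :: real
    using that by (auto simp: matrix_vector_mult_scaleR)
  obtain s :: real where "s \<in> {-1, 1}" and "0 \<le> (A *v (s *\<^sub>R u)) $ j * (u \<bullet> (H j *v u))"
  proof (cases "0 \<le> (A *v u) $ j * (u \<bullet> (H j *v u))")
    case True
    then show ?thesis using that[of 1] by simp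
  next
    case False
    then show ?thesis using that[of "-1"] by (simp add: vec.neg)
  qed
  with form show ?thesis
    using that quad_est_scaleR_lower_bound[of _ A "s *\<^sub>R u" j H] by auto
qed

lemma nn_integral_heavy_tailed_error_quad_est:
  fixes A :: "real ^ 'n::finite ^ 'k::finite" and H :: "'k \<Rightarrow> real ^ 'n ^ 'n"
  assumes "(axis a 1 + axis b 1) \<bullet> (H j *v (axis a 1 + axis b 1)) \<noteq> 0"
  shows "(\<integral>\<^sup>+ y. ennreal ((norm (quad_est A H y))\<^sup>2) \<partial>heavy_tailed_error) = \<infinity>"
proof -
  define u :: "real ^ 'n" where "u = axis a 1 + axis b 1"
  define Q where "Q = u \<bullet> (H j *v u)"
  define f where "f y = ennreal ((norm (quad_est A H y))\<^sup>2)" for y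
  obtain s where s: "s \<in> {-1, 1}"
    and grow: "\<And>t. 0 \<le> t \<Longrightarrow> (t\<^sup>2 * Q)\<^sup>2 \<le> (norm (quad_est A H (t *\<^sub>R s *\<^sub>R u)))\<^sup>2"
    unfolding Q_def
    by (rule quad_est_signed_scaleR_lower_bound[where A = A and H = H and j = j and u = u]) blast
  define v where "v = (a, b, s, s)"
  have "v \<in> signed_axis_pairs"
    using s by (auto simp: v_def signed_axis_pairs_def)
  then have "0 < pmf (pmf_of_set signed_axis_pairs) v"
    by (simp add: finite_signed_axis_pairs signed_axis_pairs_nonempty card_signed_axis_pairs)
  have "0 < Q\<^sup>2"
    using assms by (simp add: Q_def u_def)
  have bound: "ennreal (Q\<^sup>2 * ((3/2) ^ m) ^ 4) \<le> f ((3/2) ^ m *\<^sub>R signed_axis_sum v)" for m :: nat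
  proof -
    have "Q\<^sup>2 * ((3/2) ^ m) ^ 4 \<le> (norm (quad_est A H ((3/2) ^ m *\<^sub>R s *\<^sub>R u)))\<^sup>2"
      using grow[of "(3/2) ^ m"] by (simp add: power_mult_distrib power_mult[symmetric] mult.commute)
    then show ?thesis
      by (simp add: f_def v_def u_def signed_axis_sum_def scaleR_add_right ennreal_leI)
  qed
  have "\<infinity> = ennreal (pmf (pmf_of_set signed_axis_pairs) v)
                  * (\<integral>\<^sup>+ m. ennreal (Q\<^sup>2 * ((3/2) ^ m) ^ 4) \<partial>geometric_pmf (3/4))"
    using \<open>0 < Q\<^sup>2\<close> \<open>0 < pmf (pmf_of_set signed_axis_pairs) v\<close>
    by (simp add: ennreal_mult nn_integral_cmult ennreal_mult_top
                  nn_integral_heavy_tail_scale_fourth_power)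
  also have "\<dots> \<le> ennreal (pmf (pmf_of_set signed_axis_pairs) v)
                  * (\<integral>\<^sup>+ m. f ((3/2) ^ m *\<^sub>R signed_axis_sum v) \<partial>geometric_pmf (3/4))"
    by (intro mult_left_mono nn_integral_mono bound) simp
  also have "\<dots> \<le> (\<integral>\<^sup>+ y. f y \<partial>heavy_tailed_error)"
  proof -
    have "f \<in> borel_measurable borel"
      unfolding f_def using borel_measurable_quad_est by measurable
    from nn_integral_distr_pair_pmf_ge[OF this, where p = "geometric_pmf (3/4)"
           and q = "pmf_of_set signed_axis_pairs" and w = v
           and e = "\<lambda>z. (3/2) ^ fst z *\<^sub>R signed_axis_sum (snd z)"]
    show ?thesis
      by (simp add: heavy_tailed_error_def)
  qed
  finally show ?thesis
    by (simp add: f_def top_unique)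
qed

lemma error_dist_in_model_class:
  assumes "error_dist M"
  shows "M \<in> model_class X"
proof -
  have "M = distr M borel (\<lambda>e. X *v 0 + e)"
    using assms by (simp add: error_dist_def distr_id2)
  then show ?thesis
    using assms unfolding model_class_def by blast
qed

theorem propositionB1:
  fixes X :: "real ^ 'k::finite ^ 'n::finite"
    and A :: "real ^ 'n ^ 'k"
    and H :: "'k \<Rightarrow> real ^ 'n ^ 'n"
  assumes "CARD('k) < CARD('n)"
    and "rank X = CARD('k)"
    and "A ** X = mat 1"
    and "\<And>j. trace (H j) = 0"
    and "\<And>j. transpose X ** H j ** X = 0"
    and "\<And>F. F \<in> model_class X \<Longrightarrow>
           (\<integral>\<^sup>+ y. ennreal ((norm (quad_est A H y))\<^sup>2) \<partial>F) < \<infinity>"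
  shows "\<exists>B :: real ^ 'n ^ 'k. \<forall>y. quad_est A H y = B *v y"
proof (cases "\<forall>j y. y \<bullet> (H j *v y) = 0")
  case True
  then have "quad_est A H y = A *v y" for y
    by (simp add: quad_est_def vec_eq_iff)
  then show ?thesis
    by blast
next
  case False
  then obtain j a b where "(axis a 1 + axis b 1) \<bullet> (H j *v (axis a 1 + axis b 1)) \<noteq> 0"
    using quadratic_form_eq_0_if_axis_sums by blast
  then have "(\<integral>\<^sup>+ y. ennreal ((norm (quad_est A H y))\<^sup>2) \<partial>heavy_tailed_error) = \<infinity>"
    by (rule nn_integral_heavy_tailed_error_quad_est)
  moreover have "heavy_tailed_error \<in> model_class X"
    by (intro error_dist_in_model_class error_dist_heavy_tailed_error)
  ultimately show ?thesis
    using assms(6) by fastforce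
qed

end
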